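(* Let $X$ and $Y$ be infinite dimensional Banach spaces that are essentially incomparable. Then no compact operator $S\in B(Y)$ is equivalent after extension to any operator $T\in B(X)$.
   Context: All Banach spaces are complex; $B(X,Y)$ denotes bounded linear operators; invertibility means bounded inverse; $X\oplus Y$ is the $\ell^2$-direct sum and $\mathrm{id}_X$ the identity. Operators $T\in B(X)$ and $S\in B(Y)$ are equivalent after extension if there exist Banach spaces $X'$, $Y'$ and invertible $E\in B(Y\oplus Y',X\oplus X')$, $F\in B(X\oplus X',Y\oplus Y')$ with $\begin{bmatrix}T&0\\0&\mathrm{id}_{X'}\end{bmatrix}=E\begin{bmatrix}S&0\\0&\mathrm{id}_{Y'}\end{bmatrix}F$. An operator $S\in B(X,Y)$ is inessential if $\mathrm{id}_X-TS$ is Fredholm for every $T\in B(Y,X)$; $\mathcal J(X,Y)$ denotes the set of inessential operators in $B(X,Y)$. The spaces $X$ and $Y$ are essentially incomparable if $B(X,Y)=\mathcal J(X,Y)$ (equivalently, $B(Y,X)=\mathcal J(Y,X)$). *)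

theory Defs
  imports "HOL-Analysis.Analysis"
begin

class cbanach = banach +
  fixes cscale :: "complex \<Rightarrow> 'a \<Rightarrow> 'a"
  assumes cscale_add_right: "cscale a (x + y) = cscale a x + cscale a y"
    and cscale_add_left: "cscale (a + b) x = cscale a x + cscale b x"
    and cscale_cscale: "cscale a (cscale b x) = cscale (a * b) x"
    and cscale_one: "cscale 1 x = x"
    and cscale_of_real: "cscale (of_real r) x = r *\<^sub>R x"
    and norm_cscale: "norm (cscale a x) = cmod a * norm x"

text \<open>The l2-direct sum X (+) Y is the product type with norm
sqrt(norm x ^ 2 + norm y ^ 2) (library norm on products) and componentwise scaling.\<close>

instantiation prod :: (cbanach, cbanach) cbanach
begin
definition cscale_prod_def: "cscale a p = (cscale a (fst p), cscale a (snd p))"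
instance
proof
  fix a b :: complex and x y :: "'a \<times> 'b" and r :: real
  show "cscale a (x + y) = cscale a x + cscale a y"
    by (simp add: cscale_prod_def cscale_add_right)
  show "cscale (a + b) x = cscale a x + cscale b x"
    by (simp add: cscale_prod_def cscale_add_left)
  show "cscale a (cscale b x) = cscale (a * b) x"
    by (simp add: cscale_prod_def cscale_cscale)
  show "cscale 1 x = x"
    by (simp add: cscale_prod_def cscale_one)
  show "cscale (of_real r) x = r *\<^sub>R x"
    by (cases x) (simp add: cscale_prod_def cscale_of_real)
  show "norm (cscale a x) = cmod a * norm x"
    by (simp add: cscale_prod_def norm_cscale norm_prod_def power_mult_distrib
        real_sqrt_mult flip: distrib_left)
qed
end

definition bounded_clinear :: "('a::cbanach \<Rightarrow> 'b::cbanach) \<Rightarrow> bool" where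
  "bounded_clinear f \<longleftrightarrow> bounded_linear f \<and> (\<forall>c x. f (cscale c x) = cscale c (f x))"

definition cinvertible :: "('a::cbanach \<Rightarrow> 'b::cbanach) \<Rightarrow> bool" where
  "cinvertible f \<longleftrightarrow> bounded_clinear f \<and>
     (\<exists>g. bounded_clinear g \<and> (\<forall>x. g (f x) = x) \<and> (\<forall>y. f (g y) = y))"

text \<open>Finite dimensionality of a (complex) subspace; a subspace is finite dimensional over
C iff it is finite dimensional over R, so the real span is used.\<close>
definition fin_dim :: "'a::cbanach set \<Rightarrow> bool" where
  "fin_dim V \<longleftrightarrow> (\<exists>B. finite B \<and> V \<subseteq> span B)"

definition fredholm :: "('a::cbanach \<Rightarrow> 'b::cbanach) \<Rightarrow> bool" where
  "fredholm A \<longleftrightarrow> bounded_clinear A \<and> fin_dim {x. A x = 0} \<and> closed (range A) \<and>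
     (\<exists>B. finite B \<and> (\<forall>y. \<exists>x z. z \<in> span B \<and> y = A x + z))"

definition inessential :: "('a::cbanach \<Rightarrow> 'b::cbanach) \<Rightarrow> bool" where
  "inessential S \<longleftrightarrow> bounded_clinear S \<and>
     (\<forall>T :: 'b \<Rightarrow> 'a. bounded_clinear T \<longrightarrow> fredholm (\<lambda>x. x - T (S x)))"

definition essentially_incomparable :: "'a::cbanach itself \<Rightarrow> 'b::cbanach itself \<Rightarrow> bool" where
  "essentially_incomparable _ _ \<longleftrightarrow>
     (\<forall>S :: 'a \<Rightarrow> 'b. bounded_clinear S \<longrightarrow> inessential S)"

definition infinite_dimensional :: "'a::cbanach itself \<Rightarrow> bool" where
  "infinite_dimensional _ \<longleftrightarrow> \<not> fin_dim (UNIV :: 'a set)"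

definition compact_operator :: "('a::cbanach \<Rightarrow> 'b::cbanach) \<Rightarrow> bool" where
  "compact_operator S \<longleftrightarrow> bounded_clinear S \<and> compact (closure (S ` cball 0 1))"

text \<open>T and S are equivalent after extension via the extension spaces X', Y' (the types
'x2, 'y2) and the invertible operators E : Y (+) Y' -> X (+) X', F : X (+) X' -> Y (+) Y':
  diag(T, id_X') = E diag(S, id_Y') F.
The existential over X', Y' is expressed in the theorem by universal quantification
over the types, since the claim is the negation.\<close>
definition equiv_after_ext_via ::
  "('x::cbanach \<Rightarrow> 'x) \<Rightarrow> ('y::cbanach \<Rightarrow> 'y) \<Rightarrow>
   ('y \<times> 'y2::cbanach \<Rightarrow> 'x \<times> 'x2::cbanach) \<Rightarrow> ('x \<times> 'x2 \<Rightarrow> 'y \<times> 'y2) \<Rightarrow> bool" where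
  "equiv_after_ext_via T S E F \<longleftrightarrow> cinvertible E \<and> cinvertible F \<and>
     (\<forall>p. (T (fst p), snd p) = E ((\<lambda>q. (S (fst q), snd q)) (F p)))"

end

theory Submission
  imports Defs
begin

text \<open>An equivalence after extension between \<open>T\<close> and \<open>S\<close> yields operators
  \<open>A : X \<rightarrow> Y\<close>, \<open>B : Y \<rightarrow> X\<close> and \<open>P : Y \<rightarrow> Y\<close> with \<open>I\<^sub>Y = A B + P S\<close>. Since \<open>A\<close> is
  inessential, \<open>I\<^sub>X - B A\<close> is Fredholm, so its range has finite codimension; applying
  \<open>A\<close> shows that \<open>Y\<close> is the sum of the range of the compact operator \<open>P S\<close> and a
  finite-dimensional subspace \<open>W\<close>. Hence \<open>Y\<close> is covered by the countably many compact sets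
  \<open>n \<cdot> closure (P S (B\<^sub>Y)) + (W \<inter> n B\<^sub>Y)\<close>; by the Baire category theorem one of them
  has interior, so \<open>Y\<close> has a compact ball and is finite dimensional by Riesz's theorem.\<close>

lemma closed_if_closed_Int_cball:
  fixes S :: "'a::real_normed_vector set"
  assumes "\<And>r. closed (S \<inter> cball 0 r)"
  shows "closed S"
proof -
  have "x \<in> S" if "x \<in> closure S" for x
  proof -
    let ?r = "norm x + 1"
    have "x \<in> ball 0 ?r \<inter> closure S" using that by simp
    also have "\<dots> \<subseteq> closure (ball 0 ?r \<inter> S)" by (simp add: open_Int_closure_subset)
    also have "\<dots> \<subseteq> closure (S \<inter> cball 0 ?r)" by (intro closure_mono) auto
    also have "\<dots> = S \<inter> cball 0 ?r" using assms closure_closed by blast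
    finally show ?thesis by blast
  qed
  then show ?thesis using closure_subset_eq closure_subset by blast
qed

lemma infdist_scaleR_le_norm:
  fixes b v :: "'a::real_normed_vector"
  assumes "subspace U" "v \<in> U"
  shows "\<bar>t\<bar> * infdist b U \<le> norm (t *\<^sub>R b + v)"
proof (cases "t = 0")
  case False
  have "- (1/t) *\<^sub>R v \<in> U" using assms by (simp add: subspace_neg subspace_scale)
  then have "infdist b U \<le> norm (b + (1/t) *\<^sub>R v)"
    using infdist_le[of "- (1/t) *\<^sub>R v" U b] by (simp add: dist_norm)
  also have "\<dots> = norm ((1/t) *\<^sub>R (t *\<^sub>R b + v))"
    using False by (simp add: algebra_simps)
  also have "\<dots> = norm (t *\<^sub>R b + v) / \<bar>t\<bar>" by simp
  finally show ?thesis using False by (simp add: field_simps)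
qed simp

lemma compact_span_Int_cball:
  fixes V :: "'a::real_normed_vector set"
  assumes "finite V"
  shows "compact (span V \<inter> cball 0 r)"
  using assms
proof (induction V arbitrary: r rule: finite_induct)
  case empty
  have "span {} \<inter> cball (0::'a) r \<subseteq> {0}" by auto
  then show ?case by (meson finite.emptyI finite_imp_compact finite_insert finite_subset)
next
  case (insert b V)
  show ?case
  proof (cases "b \<in> span V")
    case True
    then show ?thesis using insert.IH span_redundant by metis
  next
    case False
    have "closed (span V)"
      by (rule closed_if_closed_Int_cball) (use insert.IH compact_imp_closed in blast)
    then have d: "infdist b (span V) > 0"
      using infdist_pos_not_in_closed False span_zero by blast
    \<comment> \<open>the coefficient of \<open>b\<close> is bounded because \<open>b\<close> has positive distance from \<open>span V\<close>\<close>
    define c where "c = r / infdist b (span V)"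
    define R where "R = r + c * norm b"
    define f where "f = (\<lambda>(t, v). t *\<^sub>R b + v)"
    have "span (insert b V) \<inter> cball 0 r \<subseteq> f ` ({-c..c} \<times> (span V \<inter> cball 0 R))"
    proof
      fix w assume w: "w \<in> span (insert b V) \<inter> cball 0 r"
      then obtain t where v: "w - t *\<^sub>R b \<in> span V" by (auto simp: span_insert)
      have "\<bar>t\<bar> * infdist b (span V) \<le> norm w"
        using infdist_scaleR_le_norm[OF subspace_span v, of t b] by simp
      then have t: "\<bar>t\<bar> \<le> c" using w d by (simp add: c_def field_simps)
      have "norm (w - t *\<^sub>R b) \<le> norm w + \<bar>t\<bar> * norm b"
        by (rule norm_triangle_ineq4[THEN order_trans]) simp
      also have "\<dots> \<le> R" unfolding R_def using w t by (intro add_mono mult_right_mono) auto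
      finally have "(t, w - t *\<^sub>R b) \<in> {-c..c} \<times> (span V \<inter> cball 0 R)" using t v by auto
      then show "w \<in> f ` ({-c..c} \<times> (span V \<inter> cball 0 R))"
        by (rule rev_image_eqI) (simp add: f_def)
    qed
    moreover have "f ` ({-c..c} \<times> span V) \<subseteq> span (insert b V)"
    proof (clarsimp simp: f_def)
      fix t v assume "v \<in> span V"
      then show "t *\<^sub>R b + v \<in> span (insert b V)"
        by (meson span_add span_base span_mono span_scale insertI1 subset_insertI subsetD)
    qed
    ultimately have "span (insert b V) \<inter> cball 0 r =
        f ` ({-c..c} \<times> (span V \<inter> cball 0 R)) \<inter> cball 0 r"
      by blast
    moreover have "compact (f ` ({-c..c} \<times> (span V \<inter> cball 0 R)))"
      unfolding f_def case_prod_unfold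
      by (intro compact_continuous_image continuous_intros compact_Times insert.IH compact_Icc)
    ultimately show ?thesis by (simp add: compact_Int_closed)
  qed
qed

lemma closed_span_finite:
  fixes V :: "'a::real_normed_vector set"
  assumes "finite V"
  shows "closed (span V)"
  by (rule closed_if_closed_Int_cball)
    (use compact_span_Int_cball[OF assms] compact_imp_closed in blast)

lemma approx_by_span_if_cball_covered:
  fixes x :: "'a::real_normed_vector"
  assumes cover: "cball 0 \<rho> \<subseteq> (\<Union>c\<in>D. ball c (\<rho>/2))" and x: "x \<in> cball 0 \<rho>"
  shows "\<exists>w\<in>span D. dist x w \<le> \<rho> / 2^m"
  using x
proof (induction m arbitrary: x)
  case 0
  then show ?case by (intro bexI[of _ 0]) (auto simp: span_zero dist_norm)
next
  case (Suc m)
  obtain c where c: "c \<in> D" "dist c x < \<rho>/2" using Suc.prems cover by auto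
  have "2 *\<^sub>R (x - c) \<in> cball 0 \<rho>"
    using c(2) by (simp add: dist_norm norm_minus_commute)
  then obtain w where w: "w \<in> span D" "dist (2 *\<^sub>R (x - c)) w \<le> \<rho> / 2^m"
    using Suc.IH by blast
  have "c + (1/2) *\<^sub>R w \<in> span D"
    using w(1) c(1) by (simp add: span_add span_base span_scale)
  moreover have "dist x (c + (1/2) *\<^sub>R w) = dist (2 *\<^sub>R (x - c)) w / 2"
  proof -
    have "2 *\<^sub>R (x - c) - w = 2 *\<^sub>R (x - (c + (1/2) *\<^sub>R w))"
      by (simp add: algebra_simps)
    then show ?thesis by (simp add: dist_norm)
  qed
  ultimately show ?case using w(2) by (intro bexI[of _ "c + (1/2) *\<^sub>R w"]) auto
qed

lemma finite_span_UNIV_if_compact_cball: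
  fixes \<rho> :: real
  assumes "\<rho> > 0" and "compact (cball (0::'a::real_normed_vector) \<rho>)"
  shows "\<exists>D. finite D \<and> (UNIV::'a set) \<subseteq> span D"
proof -
  have cover: "cball (0::'a) \<rho> \<subseteq> (\<Union>c\<in>cball 0 \<rho>. ball c (\<rho>/2))"
    using assms(1) by force
  obtain D where "D \<subseteq> cball 0 \<rho>"
    and D: "finite D" "cball (0::'a) \<rho> \<subseteq> (\<Union>c\<in>D. ball c (\<rho>/2))"
    by (rule compactE_image[OF assms(2) open_ball cover])
  have ball_span: "x \<in> span D" if x: "x \<in> cball 0 \<rho>" for x
  proof -
    have "x \<in> closure (span D)"
      unfolding closure_approachable
    proof (intro allI impI)
      fix e :: real assume "e > 0"
      obtain m :: nat where "\<rho> / e < 2 ^ m"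
        using real_arch_pow[of 2 "\<rho>/e"] by auto
      then have "\<rho> / 2^m < e" using \<open>e > 0\<close> by (simp add: field_simps)
      moreover obtain w where "w \<in> span D" "dist x w \<le> \<rho> / 2^m"
        using approx_by_span_if_cball_covered[OF D(2) x] by blast
      ultimately show "\<exists>y\<in>span D. dist y x < e"
        by (intro bexI[of _ w]) (auto simp: dist_commute)
    qed
    then show "x \<in> span D" using closed_span_finite[OF D(1)] closure_closed by auto
  qed
  have "UNIV \<subseteq> span D"
  proof
    fix y :: 'a
    show "y \<in> span D"
    proof (cases "y = 0")
      case False
      have "(\<rho> / norm y) *\<^sub>R y \<in> span D" using assms(1) False by (intro ball_span) simp
      then have "(norm y / \<rho>) *\<^sub>R ((\<rho> / norm y) *\<^sub>R y) \<in> span D" by (rule span_scale)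
      then show ?thesis using False assms(1) by simp
    qed (simp add: span_zero)
  qed
  with D(1) show ?thesis by blast
qed

lemma finite_span_UNIV_if_compact_interior:
  fixes M :: "'a::real_normed_vector set"
  assumes "compact M" and "x0 \<in> interior M"
  shows "\<exists>D. finite D \<and> (UNIV::'a set) \<subseteq> span D"
proof -
  obtain e where e: "e > 0" "cball x0 e \<subseteq> M"
    using assms(2) by (auto simp: mem_interior_cball)
  have "compact (cball x0 e)"
    using compact_Int_closed[OF assms(1) closed_cball, of x0 e] e(2) by (simp add: Int_absorb1)
  then have "compact ((\<lambda>x. x - x0) ` cball x0 e)" by (rule compact_translation_subtract)
  moreover have "(\<lambda>x. x - x0) ` cball x0 e = cball (0::'a) e"
    using cball_translation_subtract[of x0 x0 e] by simp
  ultimately have "compact (cball (0::'a) e)" by simp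
  then show ?thesis by (rule finite_span_UNIV_if_compact_cball[OF e(1)])
qed

lemma interior_nonempty_if_compact_cover:
  fixes M :: "nat \<Rightarrow> 'a::banach set"
  assumes "\<And>n. compact (M n)" and "(\<Union>n. M n) = UNIV"
  shows "\<exists>n. interior (M n) \<noteq> {}"
proof (rule ccontr)
  assume "\<nexists>n. interior (M n) \<noteq> {}"
  then have "euclidean interior_of \<Union>(range M) = {}"
    by (intro Baire_category_alt)
      (auto simp: completely_metrizable_space_euclidean closed_closedin[symmetric]
        intro: compact_imp_closed assms(1))
  then show False using assms(2) by simp
qed

lemma finite_span_UNIV_if_compact_plus_finite_span:
  fixes K :: "'a::banach \<Rightarrow> 'a"
  assumes K: "bounded_linear K" and L: "compact L" and KL: "K ` cball 0 1 \<subseteq> L"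
    and W: "finite W" and dec: "\<And>y. \<exists>z w. w \<in> span W \<and> y = K z + w"
  shows "\<exists>D. finite D \<and> (UNIV::'a set) \<subseteq> span D"
proof -
  interpret K: bounded_linear K by (rule K)
  define M where
    "M n = {a + c | a c. a \<in> (\<lambda>x. real n *\<^sub>R x) ` L \<and> c \<in> span W \<inter> cball 0 (real n)}"
    for n :: nat
  have cM: "compact (M n)" for n
    unfolding M_def by (intro compact_sums compact_scaling L compact_span_Int_cball W)
  have M: "y \<in> M n"
    if n: "norm z \<le> real n" "norm w \<le> real n" and zw: "w \<in> span W" "y = K z + w" for y z w n
  proof -
    have "K z \<in> (\<lambda>x. real n *\<^sub>R x) ` L"
    proof (cases "n = 0")
      case True
      then have "K z = real n *\<^sub>R K 0" using n by simp
      moreover have "K 0 \<in> L" using KL by (metis centre_in_cball image_subset_iff zero_le_one)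
      ultimately show ?thesis by blast
    next
      case False
      have "K ((1 / real n) *\<^sub>R z) \<in> L" using n False KL by (auto simp: field_simps)
      moreover have "K z = real n *\<^sub>R K ((1 / real n) *\<^sub>R z)" using False by (simp add: K.scaleR)
      ultimately show ?thesis by blast
    qed
    moreover have "w \<in> span W \<inter> cball 0 (real n)" using zw n by simp
    ultimately show ?thesis unfolding M_def zw(2) by blast
  qed
  have "y \<in> (\<Union>n. M n)" for y
  proof -
    obtain z w where "w \<in> span W" "y = K z + w" using dec by blast
    moreover obtain n :: nat where "max (norm z) (norm w) \<le> real n" using real_arch_simple by blast
    ultimately show ?thesis using M by (meson UN_I UNIV_I max.boundedE)
  qed
  then have "(\<Union>n. M n) = UNIV" by blast
  then have "\<exists>n. interior (M n) \<noteq> {}" by (rule interior_nonempty_if_compact_cover[OF cM])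
  then obtain n x0 where "x0 \<in> interior (M n)" by blast
  then show ?thesis by (rule finite_span_UNIV_if_compact_interior[OF cM])
qed

lemma cscale_zero [simp]: "cscale c (0::'a::cbanach) = 0"
  using norm_cscale[of c "0::'a"] by simp

lemma bounded_clinear_fst_comp_Pair_zero:
  fixes f :: "'a::cbanach \<times> 'b::cbanach \<Rightarrow> 'c::cbanach \<times> 'd::cbanach"
  assumes "bounded_clinear f"
  shows "bounded_clinear (\<lambda>x. fst (f (x, 0)))"
proof -
  have lf: "bounded_linear f" and cf: "\<And>c p. f (cscale c p) = cscale c (f p)"
    using assms unfolding bounded_clinear_def by auto
  have "bounded_linear (\<lambda>x. fst (f (x, 0)))"
    by (intro bounded_linear_intros bounded_linear_compose[OF lf])
  moreover have "fst (f (cscale c x, 0)) = cscale c (fst (f (x, 0)))" for c x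
    using cf[of c "(x, 0)"] by (simp add: cscale_prod_def)
  ultimately show ?thesis unfolding bounded_clinear_def by blast
qed

text \<open>Applying the defining identity to \<open>H (y, 0)\<close>, where \<open>H = F\<^sup>-\<^sup>1\<close>, identifies its second
  component as \<open>snd (E (S y, 0))\<close>; the first component of \<open>F (H (y, 0)) = (y, 0)\<close> then
  splits \<open>y\<close> as \<open>A (B y) + P (S y)\<close>.\<close>

lemma equiv_after_ext_via_factorization:
  fixes T :: "'x::cbanach \<Rightarrow> 'x" and S :: "'y::cbanach \<Rightarrow> 'y"
    and E :: "'y \<times> 'y2::cbanach \<Rightarrow> 'x \<times> 'x2::cbanach" and F :: "'x \<times> 'x2 \<Rightarrow> 'y \<times> 'y2"
  assumes "equiv_after_ext_via T S E F"
  obtains A :: "'x \<Rightarrow> 'y" and B :: "'y \<Rightarrow> 'x" and P :: "'y \<Rightarrow> 'y"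
  where "bounded_clinear A" "bounded_clinear B" "bounded_linear P" "\<And>y. A (B y) + P (S y) = y"
proof -
  have E: "bounded_linear E" and F: "bounded_clinear F"
    and eq: "\<And>p. (T (fst p), snd p) = E (S (fst (F p)), snd (F p))"
    using assms unfolding equiv_after_ext_via_def cinvertible_def bounded_clinear_def by auto
  obtain H where H: "bounded_clinear H" "\<And>q. F (H q) = q"
    using assms unfolding equiv_after_ext_via_def cinvertible_def by blast
  interpret F: bounded_linear F using F unfolding bounded_clinear_def by blast
  show thesis
  proof (rule that)
    show "bounded_clinear (\<lambda>x. fst (F (x, 0)))" "bounded_clinear (\<lambda>y. fst (H (y, 0)))"
      using F H(1) by (auto intro: bounded_clinear_fst_comp_Pair_zero)
    show "bounded_linear (\<lambda>z. fst (F (0, snd (E (z, 0)))))"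
      by (intro bounded_linear_intros bounded_linear_compose[OF F.bounded_linear]
          bounded_linear_compose[OF E])
    fix y
    have "snd (H (y, 0)) = snd (E (S y, 0))"
      using eq[of "H (y, 0)"] by (simp add: H(2) prod_eq_iff)
    then have "H (y, 0) = (fst (H (y, 0)), 0) + (0, snd (E (S y, 0)))"
      by (simp add: prod_eq_iff)
    then have "(y, 0) = F (fst (H (y, 0)), 0) + F (0, snd (E (S y, 0)))"
      by (metis H(2) F.add)
    then show "fst (F (fst (H (y, 0)), 0)) + fst (F (0, snd (E (S y, 0)))) = y"
      by (metis fst_add fst_conv)
  qed
qed

lemma range_plus_span_image_if_right_inverse_modulo:
  fixes A :: "'a::real_vector \<Rightarrow> 'b::real_vector"
  assumes A: "linear A" and K: "linear K" and ABK: "\<And>y. A (B y) + K y = y"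
    and G: "\<And>x. \<exists>x' z. z \<in> span G \<and> x = (x' - B (A x')) + z"
  shows "\<exists>z w. w \<in> span (A ` G) \<and> y = K z + w"
proof -
  interpret A: linear A by (rule A)
  interpret K: linear K by (rule K)
  obtain x' z where z: "z \<in> span G" and Bx': "B y = (x' - B (A x')) + z"
    using G by blast
  have "A (B y) = A x' - A (B (A x')) + A z" by (simp add: Bx' A.add A.diff)
  also have "\<dots> = K (A x') + A z" using ABK[of "A x'"] by (simp add: algebra_simps)
  finally have "y = K (A x' + y) + A z" using ABK[of y] by (simp add: K.add algebra_simps)
  moreover have "A z \<in> span (A ` G)" using z span_linear_image[OF A, of G] by blast
  ultimately show ?thesis by blast
qed

theorem theorem5p2:
  fixes T :: "'x::cbanach \<Rightarrow> 'x"
    and S :: "'y::cbanach \<Rightarrow> 'y"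
    and E :: "'y \<times> 'y2::cbanach \<Rightarrow> 'x \<times> 'x2::cbanach"
    and F :: "'x \<times> 'x2 \<Rightarrow> 'y \<times> 'y2"
  assumes "infinite_dimensional TYPE('x)"
    and "infinite_dimensional TYPE('y)"
    and "essentially_incomparable TYPE('x) TYPE('y)"
    and "compact_operator S"
    and "bounded_clinear T"
  shows "\<not> equiv_after_ext_via T S E F"
proof
  assume "equiv_after_ext_via T S E F"
  then obtain A :: "'x \<Rightarrow> 'y" and B P
    where A: "bounded_clinear A" and B: "bounded_clinear B"
      and P: "bounded_linear P" and ABPS: "\<And>y. A (B y) + P (S y) = y"
    using equiv_after_ext_via_factorization by blast
  have "fredholm (\<lambda>x. x - B (A x))"
    using assms(3) A B unfolding essentially_incomparable_def inessential_def by blast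
  then obtain G where G: "finite G" "\<And>x. \<exists>x' z. z \<in> span G \<and> x = (x' - B (A x')) + z"
    unfolding fredholm_def by blast
  have S: "bounded_linear S" "compact (closure (S ` cball 0 1))"
    using assms(4) unfolding compact_operator_def bounded_clinear_def by auto
  have "\<exists>D. finite D \<and> (UNIV::'y set) \<subseteq> span D"
  proof (rule finite_span_UNIV_if_compact_plus_finite_span)
    show "bounded_linear (P \<circ> S)" using P S(1) by (simp add: bounded_linear_compose o_def)
    show "compact (P ` closure (S ` cball 0 1))"
      using P S(2) by (intro compact_continuous_image linear_continuous_on)
    show "(P \<circ> S) ` cball 0 1 \<subseteq> P ` closure (S ` cball 0 1)"
      unfolding image_comp[symmetric] by (intro image_mono closure_subset)
    show "finite (A ` G)" using G(1) by simp
    show "\<exists>z w. w \<in> span (A ` G) \<and> y = (P \<circ> S) z + w" for y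
      using A B P S(1) ABPS G(2) unfolding bounded_clinear_def
      by (intro range_plus_span_image_if_right_inverse_modulo)
        (auto intro: bounded_linear.linear bounded_linear_compose)
  qed
  then show False using assms(2) unfolding infinite_dimensional_def fin_dim_def by blast
qed

end
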